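(* Let $A$ be a commutative noetherian local ring and let $x,y\in A$ be a regular exact pair of zero divisors. Let $a,b\in A$ be such that (1) $a$ or $b$ is weakly regular on the $A$-module $A/(x,y)$, and (2) $a$ and $b$ are not both units. Then the $A$-modules $G_a$ and $H_b$ are not isomorphic.
   Context: Two non-units $x,y\in A$ form an exact pair of zero divisors if $\operatorname{Ann}_A(x)=(y)$ and $\operatorname{Ann}_A(y)=(x)$; such a pair is regular if $(x)\cap(y)=0$. An element $a\in A$ is weakly regular on a module $M$ if multiplication by $a$ on $M$ is injective. For $a\in A$, let $\gamma_a=\begin{pmatrix} x & a\\ 0 & y\end{pmatrix}$ and $\eta_a=\begin{pmatrix} y & -a\\ 0 & x\end{pmatrix}$, viewed as $A$-linear maps $A^2\to A^2$ acting on column vectors, and set $G_a=\operatorname{Coker}\gamma_a$, $H_a=\operatorname{Coker}\eta_a$. *)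

theory Defs
  imports Main
begin

definition is_ideal :: "'a::comm_ring_1 set \<Rightarrow> bool" where
  "is_ideal I \<longleftrightarrow> 0 \<in> I \<and> (\<forall>u\<in>I. \<forall>v\<in>I. u + v \<in> I) \<and> (\<forall>r. \<forall>u\<in>I. r * u \<in> I)"

definition gen_ideal :: "'a::comm_ring_1 list \<Rightarrow> 'a set" where
  "gen_ideal gs = {\<Sum>i<length gs. c i * gs ! i | c. True}"

definition noetherian_ring :: "'a::comm_ring_1 itself \<Rightarrow> bool" where
  "noetherian_ring _ \<longleftrightarrow> (\<forall>I::'a set. is_ideal I \<longrightarrow> (\<exists>gs. I = gen_ideal gs))"

definition maximal_ideal :: "'a::comm_ring_1 set \<Rightarrow> bool" where
  "maximal_ideal M \<longleftrightarrow> is_ideal M \<and> M \<noteq> UNIV \<and>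
     (\<forall>J. is_ideal J \<and> M \<subseteq> J \<longrightarrow> J = M \<or> J = UNIV)"

definition local_ring :: "'a::comm_ring_1 itself \<Rightarrow> bool" where
  "local_ring _ \<longleftrightarrow> (\<exists>!M::'a set. maximal_ideal M)"

definition principal :: "'a::comm_ring_1 \<Rightarrow> 'a set" where
  "principal x = {x * r | r. True}"

definition Ann :: "'a::comm_ring_1 \<Rightarrow> 'a set" where
  "Ann x = {r. x * r = 0}"

definition exact_pair :: "'a::comm_ring_1 \<Rightarrow> 'a \<Rightarrow> bool" where
  "exact_pair x y \<longleftrightarrow> \<not> x dvd 1 \<and> \<not> y dvd 1 \<and> Ann x = principal y \<and> Ann y = principal x"

definition regular_exact_pair :: "'a::comm_ring_1 \<Rightarrow> 'a \<Rightarrow> bool" where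
  "regular_exact_pair x y \<longleftrightarrow> exact_pair x y \<and> principal x \<inter> principal y = {0}"

definition weakly_regular_quot2 :: "'a::comm_ring_1 \<Rightarrow> 'a \<Rightarrow> 'a \<Rightarrow> bool" where
  "weakly_regular_quot2 a x y \<longleftrightarrow> (\<forall>r. a * r \<in> gen_ideal [x, y] \<longrightarrow> r \<in> gen_ideal [x, y])"

text \<open>A 2x2 matrix (rows (m11,m12),(m21,m22)) acting on column vectors in A^2 = A \<times> A.\<close>
definition mat2_apply :: "('a::comm_ring_1 \<times> 'a) \<times> ('a \<times> 'a) \<Rightarrow> 'a \<times> 'a \<Rightarrow> 'a \<times> 'a" where
  "mat2_apply M v = (fst (fst M) * fst v + snd (fst M) * snd v,
                     fst (snd M) * fst v + snd (snd M) * snd v)"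

definition gamma_mat :: "'a::comm_ring_1 \<Rightarrow> 'a \<Rightarrow> 'a \<Rightarrow> ('a \<times> 'a) \<times> ('a \<times> 'a)" where
  "gamma_mat x y a = ((x, a), (0, y))"

definition eta_mat :: "'a::comm_ring_1 \<Rightarrow> 'a \<Rightarrow> 'a \<Rightarrow> ('a \<times> 'a) \<times> ('a \<times> 'a)" where
  "eta_mat x y a = ((y, - a), (0, x))"

definition coker_class :: "('a::comm_ring_1 \<times> 'a) \<times> ('a \<times> 'a) \<Rightarrow> 'a \<times> 'a \<Rightarrow> ('a \<times> 'a) set" where
  "coker_class M v = {w. (fst w - fst v, snd w - snd v) \<in> range (mat2_apply M)}"

definition coker :: "('a::comm_ring_1 \<times> 'a) \<times> ('a \<times> 'a) \<Rightarrow> ('a \<times> 'a) set set" where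
  "coker M = range (coker_class M)"

text \<open>Isomorphism of A-modules Coker M \<cong> Coker N: a bijection of the quotients which is A-linear
  (addition and scalar multiplication on classes being computed on representatives).\<close>
definition coker_iso :: "('a::comm_ring_1 \<times> 'a) \<times> ('a \<times> 'a) \<Rightarrow> ('a \<times> 'a) \<times> ('a \<times> 'a) \<Rightarrow> bool" where
  "coker_iso M N \<longleftrightarrow> (\<exists>f. bij_betw f (coker M) (coker N) \<and>
     (\<forall>u v p q. \<forall>c::'a. f (coker_class M u) = coker_class N p \<longrightarrow> f (coker_class M v) = coker_class N q \<longrightarrow>
        f (coker_class M (c * fst u + fst v, c * snd u + snd v)) = coker_class N (c * fst p + fst q, c * snd p + snd q)))"

end

theory Submission
  imports Defs "HOL-Library.Product_Plus"
begin

text \<open>An isomorphism between Coker gamma_a and Coker eta_b lifts to endomorphisms Q, Q' of A^2 with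
  Q (im gamma_a) \<subseteq> im eta_b, Q' (im eta_b) \<subseteq> im gamma_a and Q' Q \<equiv> id modulo im gamma_a.
  Weak regularity of a or b on A/(x,y), together with Ann y = (x), forces the lower left entries
  of Q and Q' into (x,y). The lower right entry of Q' Q is \<equiv> 1 modulo (y) and \<equiv> the product of the
  lower right entries of Q' and Q modulo (x,y), so both of these are units in the local ring A.
  Finally, writing the lower left entry of Q' as \<alpha> x + \<beta> y, the condition (x) \<inter> (y) = 0 turns the
  second row of Q' (-b, x) \<in> im gamma_a into b \<alpha> \<in> q'22 + (y), a unit; hence b is a unit. The
  substitution x \<leftrightarrow> y, a \<mapsto> -b, b \<mapsto> -a exchanges gamma_a and eta_b and gives the same for a.\<close>

lemma is_ideal_UNIV_iff: "is_ideal I \<Longrightarrow> I = UNIV \<longleftrightarrow> (1::'a::comm_ring_1) \<in> I"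
  unfolding is_ideal_def by (metis UNIV_I equalityI mult.right_neutral subsetI)

lemma is_ideal_principal: "is_ideal (principal r)"
  unfolding is_ideal_def principal_def
proof (intro conjI ballI allI)
  show "0 \<in> {r * t |t. True}" by (auto intro: exI[of _ 0])
next
  fix u v assume "u \<in> {r * t |t. True}" "v \<in> {r * t |t. True}"
  then show "u + v \<in> {r * t |t. True}" by (auto simp: distrib_left[symmetric])
next
  fix s u assume "u \<in> {r * t |t. True}"
  then show "s * u \<in> {r * t |t. True}" by (auto simp: mult.left_commute)
qed

lemma is_ideal_Union_chain:
  assumes "C \<noteq> {}" "\<And>I. I \<in> C \<Longrightarrow> is_ideal I" "\<And>I J. I \<in> C \<Longrightarrow> J \<in> C \<Longrightarrow> I \<subseteq> J \<or> J \<subseteq> I"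
  shows "is_ideal (\<Union>C)"
  unfolding is_ideal_def
proof (intro conjI ballI allI)
  show "0 \<in> \<Union>C" using assms(1,2) unfolding is_ideal_def by blast
next
  fix u v assume "u \<in> \<Union>C" "v \<in> \<Union>C"
  then obtain I J where "I \<in> C" "u \<in> I" "J \<in> C" "v \<in> J" by blast
  moreover have "I \<subseteq> J \<or> J \<subseteq> I" using assms(3) \<open>I \<in> C\<close> \<open>J \<in> C\<close> .
  ultimately show "u + v \<in> \<Union>C" using assms(2) unfolding is_ideal_def by blast
next
  fix s u assume "u \<in> \<Union>C"
  then show "s * u \<in> \<Union>C" using assms(2) unfolding is_ideal_def by blast
qed

lemma maximal_ideal_containing:
  fixes r :: "'a::comm_ring_1"
  assumes "\<not> r dvd 1"
  obtains M where "maximal_ideal M" "r \<in> M"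
proof -
  define S where "S = {I::'a set. is_ideal I \<and> r \<in> I \<and> 1 \<notin> I}"
  have "principal r \<in> S"
    using assms is_ideal_principal unfolding S_def principal_def
    by (auto intro: exI[of _ 1] simp: dvd_def)
  have "\<exists>U\<in>S. \<forall>I\<in>C. I \<subseteq> U" if C: "C \<in> chains S" for C
  proof (cases "C = {}")
    case True
    then show ?thesis using \<open>principal r \<in> S\<close> by blast
  next
    case False
    have "C \<subseteq> S" using C chainsD2 by blast
    moreover have "is_ideal (\<Union>C)"
      using False \<open>C \<subseteq> S\<close> chainsD[OF C] by (intro is_ideal_Union_chain) (auto simp: S_def)
    ultimately have "\<Union>C \<in> S" using False unfolding S_def by blast
    then show ?thesis by blast
  qed
  then obtain M where M: "M \<in> S" "\<forall>I\<in>S. M \<subseteq> I \<longrightarrow> I = M"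
    using Zorn_Lemma2[of S] by blast
  have "maximal_ideal M"
    unfolding maximal_ideal_def
  proof (intro conjI allI impI)
    show "is_ideal M" "M \<noteq> UNIV" using M(1) unfolding S_def by blast+
    fix J assume J: "is_ideal J \<and> M \<subseteq> J"
    show "J = M \<or> J = UNIV"
    proof (cases "1 \<in> J")
      case True
      then show ?thesis using J is_ideal_UNIV_iff by blast
    next
      case False
      then have "J \<in> S" using J M(1) unfolding S_def by blast
      then show ?thesis using M J by blast
    qed
  qed
  then show thesis using that M(1) unfolding S_def by blast
qed

lemma local_ring_nonunit_add:
  fixes r s :: "'a::comm_ring_1"
  assumes "local_ring TYPE('a)" "\<not> r dvd 1" "\<not> s dvd 1"
  shows "\<not> (r + s) dvd 1"
proof
  assume "(r + s) dvd 1"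
  then obtain k where k: "1 = (r + s) * k" by (auto elim: dvdE)
  obtain M where M: "maximal_ideal M" "r \<in> M" using maximal_ideal_containing[OF assms(2)] .
  obtain N where N: "maximal_ideal N" "s \<in> N" using maximal_ideal_containing[OF assms(3)] .
  have "M = N" using assms(1) M N unfolding local_ring_def by blast
  then have "r + s \<in> M" using M N unfolding maximal_ideal_def is_ideal_def by blast
  then have "1 \<in> M" using k M(1) unfolding maximal_ideal_def is_ideal_def by (metis mult.commute)
  then show False using M(1) is_ideal_UNIV_iff unfolding maximal_ideal_def by blast
qed

lemma local_ring_unit_add_nonunit:
  fixes u n :: "'a::comm_ring_1"
  assumes "local_ring TYPE('a)" "u dvd 1" "\<not> n dvd 1"
  shows "(u + n) dvd 1"
proof (rule ccontr)
  assume "\<not> (u + n) dvd 1"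
  moreover have "\<not> (- n) dvd 1" using assms(3) by simp
  ultimately have "\<not> ((u + n) + (- n)) dvd 1" using local_ring_nonunit_add[OF assms(1)] by blast
  then show False using assms(2) by simp
qed

lemma gen_ideal_pair_iff: "z \<in> gen_ideal [x, y] \<longleftrightarrow> (\<exists>r s. z = r * x + s * (y::'a::comm_ring_1))"
proof
  assume "z \<in> gen_ideal [x, y]"
  then obtain c where "z = (\<Sum>i<length [x, y]. c i * [x, y] ! i)" unfolding gen_ideal_def by blast
  then have "z = c 0 * x + c 1 * y" by (simp add: eval_nat_numeral)
  then show "\<exists>r s. z = r * x + s * y" by blast
next
  assume "\<exists>r s. z = r * x + s * y"
  then obtain r s where "z = r * x + s * y" by blast
  moreover define c where "c = (\<lambda>i::nat. if i = 0 then r else s)"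
  ultimately have "z = (\<Sum>i<length [x, y]. c i * [x, y] ! i)"
    by (simp add: eval_nat_numeral)
  then show "z \<in> gen_ideal [x, y]" unfolding gen_ideal_def by blast
qed

lemma gen_ideal_pair_commute: "gen_ideal [y, x] = gen_ideal [x, (y::'a::comm_ring_1)]"
proof -
  have "z \<in> gen_ideal [x, y]" if "z \<in> gen_ideal [y, x]" for x y z :: 'a
  proof -
    from that obtain r s where "z = r * y + s * x" unfolding gen_ideal_pair_iff by blast
    then have "z = s * x + r * y" by (simp add: add.commute)
    then show ?thesis unfolding gen_ideal_pair_iff by blast
  qed
  then show ?thesis by blast
qed

lemma gen_ideal_pair_uminus_iff: "- z \<in> gen_ideal [x, y] \<longleftrightarrow> z \<in> gen_ideal [x, (y::'a::comm_ring_1)]"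
proof -
  have "- z \<in> gen_ideal [x, y]" if "z \<in> gen_ideal [x, y]" for z :: 'a
  proof -
    from that obtain r s where "z = r * x + s * y" unfolding gen_ideal_pair_iff by blast
    then have "- z = (- r) * x + (- s) * y" by simp
    then show ?thesis unfolding gen_ideal_pair_iff by blast
  qed
  from this[of z] this[of "- z"] show ?thesis by auto
qed

lemma local_ring_unit_add_gen_ideal_pair:
  fixes x y :: "'a::comm_ring_1"
  assumes "local_ring TYPE('a)" "\<not> x dvd 1" "\<not> y dvd 1" "u dvd 1" "z \<in> gen_ideal [x, y]"
  shows "(u + z) dvd 1"
proof -
  from assms(5) obtain r s where z: "z = r * x + s * y" unfolding gen_ideal_pair_iff by blast
  have "\<not> (r * x) dvd 1" "\<not> (s * y) dvd 1" using assms(2,3) dvd_mult_right by blast+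
  then have "\<not> z dvd 1" unfolding z using local_ring_nonunit_add[OF assms(1)] by blast
  then show ?thesis using local_ring_unit_add_nonunit[OF assms(1,4)] by blast
qed

lemma weakly_regular_quot2_swap:
  "weakly_regular_quot2 (- a) y x \<longleftrightarrow> weakly_regular_quot2 a x y"
  unfolding weakly_regular_quot2_def gen_ideal_pair_commute
  by (simp add: gen_ideal_pair_uminus_iff)

lemma regular_exact_pair_commute: "regular_exact_pair x y \<longleftrightarrow> regular_exact_pair y x"
  unfolding regular_exact_pair_def exact_pair_def by blast

lemma regular_exact_pair_nonunits:
  assumes "regular_exact_pair x y" shows "\<not> x dvd 1" "\<not> y dvd 1"
  using assms unfolding regular_exact_pair_def exact_pair_def by blast+

text \<open>Since (x) \<inter> (y) = 0, x u \<in> (y) means x u = 0, i.e. u \<in> Ann x = (y).\<close>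
lemma regular_exact_pair_cancel:
  assumes "regular_exact_pair x y" "x * u = y * v"
  obtains k where "u = y * k"
proof -
  have "x * u \<in> principal x" "x * u \<in> principal y"
    using assms(2) unfolding principal_def by blast+
  then have "u \<in> Ann x" using assms(1) unfolding regular_exact_pair_def Ann_def by blast
  then have "u \<in> principal y" using assms(1) unfolding regular_exact_pair_def exact_pair_def by blast
  then show thesis using that unfolding principal_def by blast
qed

definition coker_linear ::
    "('a::comm_ring_1 \<times> 'a) \<times> ('a \<times> 'a) \<Rightarrow> ('a \<times> 'a) \<times> ('a \<times> 'a) \<Rightarrow> (('a \<times> 'a) set \<Rightarrow> ('a \<times> 'a) set) \<Rightarrow> bool"
  where "coker_linear M N f \<longleftrightarrow> (\<forall>u v p q. \<forall>c::'a.
     f (coker_class M u) = coker_class N p \<longrightarrow> f (coker_class M v) = coker_class N q \<longrightarrow>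
     f (coker_class M (c * fst u + fst v, c * snd u + snd v)) = coker_class N (c * fst p + fst q, c * snd p + snd q))"

lemma coker_iso_iff_linear:
  "coker_iso M N \<longleftrightarrow> (\<exists>f. bij_betw f (coker M) (coker N) \<and> coker_linear M N f)"
  unfolding coker_iso_def coker_linear_def ..

definition mat2_of_cols :: "'a \<times> 'a \<Rightarrow> 'a \<times> 'a \<Rightarrow> ('a \<times> 'a) \<times> ('a \<times> 'a)"
  where "mat2_of_cols p q = ((fst p, fst q), (snd p, snd q))"

lemma mat2_apply_of_cols_basis [simp]: "mat2_apply (mat2_of_cols (1, 0) (0, 1)) v = v"
  by (simp add: mat2_apply_def mat2_of_cols_def)

lemma mat2_apply_zero [simp]: "mat2_apply M 0 = 0"
  by (simp add: mat2_apply_def zero_prod_def)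

lemma mat2_apply_add: "mat2_apply M (v + w) = mat2_apply M v + mat2_apply M w"
  by (simp add: mat2_apply_def algebra_simps)

lemma mat2_apply_diff: "mat2_apply M (v - w) = mat2_apply M v - mat2_apply M w"
  by (simp add: mat2_apply_def algebra_simps)

lemma coker_class_eq_iff:
  "coker_class M v = coker_class M w \<longleftrightarrow> v - w \<in> range (mat2_apply M)"
proof
  assume "coker_class M v = coker_class M w"
  moreover have "v \<in> coker_class M v"
    using rangeI[of "mat2_apply M" 0] unfolding coker_class_def by (simp add: zero_prod_def[symmetric])
  ultimately show "v - w \<in> range (mat2_apply M)"
    unfolding coker_class_def minus_prod_def[symmetric] by blast
next
  assume "v - w \<in> range (mat2_apply M)"
  then obtain s where s: "v - w = mat2_apply M s" by blast
  have "u - w \<in> range (mat2_apply M) \<longleftrightarrow> u - v \<in> range (mat2_apply M)" for u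
  proof
    assume "u - w \<in> range (mat2_apply M)"
    then obtain t where "u - w = mat2_apply M t" by blast
    moreover have "u - v = (u - w) - (v - w)" by simp
    ultimately have "u - v = mat2_apply M (t - s)" using s by (simp add: mat2_apply_diff)
    then show "u - v \<in> range (mat2_apply M)" by blast
  next
    assume "u - v \<in> range (mat2_apply M)"
    then obtain t where "u - v = mat2_apply M t" by blast
    moreover have "u - w = (u - v) + (v - w)" by simp
    ultimately have "u - w = mat2_apply M (t + s)" using s by (simp add: mat2_apply_add)
    then show "u - w \<in> range (mat2_apply M)" by blast
  qed
  then show "coker_class M v = coker_class M w"
    unfolding coker_class_def minus_prod_def[symmetric] by simp
qed

lemma coker_class_eq_zero_iff: "coker_class M v = coker_class M 0 \<longleftrightarrow> v \<in> range (mat2_apply M)"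
  by (simp add: coker_class_eq_iff)

lemma coker_linear_mat2_apply:
  assumes lin: "coker_linear M N f"
    and u: "f (coker_class M u) = coker_class N p"
    and v: "f (coker_class M v) = coker_class N q"
  shows "f (coker_class M (mat2_apply (mat2_of_cols u v) c)) = coker_class N (mat2_apply (mat2_of_cols p q) c)"
proof -
  have zero: "f (coker_class M (0, 0)) = coker_class N (0, 0)"
    using lin[unfolded coker_linear_def, rule_format, OF u u, of "- 1"] by simp
  have "f (coker_class M (snd c * fst v, snd c * snd v)) = coker_class N (snd c * fst q, snd c * snd q)"
    using lin[unfolded coker_linear_def, rule_format, OF v zero, of "snd c"] by simp
  from lin[unfolded coker_linear_def, rule_format, OF u this, of "fst c"] show ?thesis
    by (simp add: mat2_apply_def mat2_of_cols_def mult.commute)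
qed

lemma coker_iso_lift:
  assumes "coker_iso M N"
  obtains Q Q' where
    "\<And>v. v \<in> range (mat2_apply M) \<Longrightarrow> mat2_apply Q v \<in> range (mat2_apply N)"
    "\<And>v. v \<in> range (mat2_apply N) \<Longrightarrow> mat2_apply Q' v \<in> range (mat2_apply M)"
    "\<And>v. mat2_apply Q' (mat2_apply Q v) - v \<in> range (mat2_apply M)"
proof -
  obtain f where bij: "bij_betw f (coker M) (coker N)" and lin: "coker_linear M N f"
    using assms unfolding coker_iso_iff_linear by blast
  have img: "\<exists>p. f (coker_class M v) = coker_class N p" for v
    using bij_betw_apply[OF bij] unfolding coker_def by blast
  have sur: "\<exists>v. f (coker_class M v) = coker_class N p" for p
  proof -
    have "coker_class N p \<in> f ` coker M"
      using bij_betw_imp_surj_on[OF bij] unfolding coker_def by blast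
    then show ?thesis unfolding coker_def by blast
  qed
  have inj: "coker_class M v = coker_class M w" if "f (coker_class M v) = f (coker_class M w)" for v w
    using inj_onD[OF bij_betw_imp_inj_on[OF bij] that] unfolding coker_def by blast
  obtain p1 p2 where "f (coker_class M (1, 0)) = coker_class N p1" "f (coker_class M (0, 1)) = coker_class N p2"
    using img by blast
  from coker_linear_mat2_apply[OF lin this]
  have fQ: "f (coker_class M v) = coker_class N (mat2_apply (mat2_of_cols p1 p2) v)" for v
    by (metis mat2_apply_of_cols_basis)
  obtain w1 w2 where "f (coker_class M w1) = coker_class N (1, 0)" "f (coker_class M w2) = coker_class N (0, 1)"
    using sur by blast
  from coker_linear_mat2_apply[OF lin this]
  have fQ': "f (coker_class M (mat2_apply (mat2_of_cols w1 w2) v)) = coker_class N v" for v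
    by (metis mat2_apply_of_cols_basis)
  show thesis
  proof
    fix v assume "v \<in> range (mat2_apply M)"
    then have "coker_class N (mat2_apply (mat2_of_cols p1 p2) v) = coker_class N 0"
      using fQ[of v] fQ[of 0] by (simp add: coker_class_eq_zero_iff[symmetric])
    then show "mat2_apply (mat2_of_cols p1 p2) v \<in> range (mat2_apply N)"
      by (simp add: coker_class_eq_zero_iff)
  next
    fix v assume "v \<in> range (mat2_apply N)"
    then have "f (coker_class M (mat2_apply (mat2_of_cols w1 w2) v)) = f (coker_class M 0)"
      using fQ'[of v] fQ'[of 0] by (simp add: coker_class_eq_zero_iff[symmetric])
    then show "mat2_apply (mat2_of_cols w1 w2) v \<in> range (mat2_apply M)"
      unfolding coker_class_eq_zero_iff[symmetric] by (rule inj)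
  next
    fix v
    have "f (coker_class M (mat2_apply (mat2_of_cols w1 w2) (mat2_apply (mat2_of_cols p1 p2) v)))
        = f (coker_class M v)"
      by (simp only: fQ'[of "mat2_apply (mat2_of_cols p1 p2) v"] fQ[of v])
    then show "mat2_apply (mat2_of_cols w1 w2) (mat2_apply (mat2_of_cols p1 p2) v) - v \<in> range (mat2_apply M)"
      unfolding coker_class_eq_iff[symmetric] by (rule inj)
  qed
qed

lemma eta_mat_eq_gamma_mat: "eta_mat x y b = gamma_mat y x (- b)"
  by (simp add: eta_mat_def gamma_mat_def)

lemma gamma_mat_eq_eta_mat: "gamma_mat x y a = eta_mat y x (- a)"
  by (simp add: eta_mat_def gamma_mat_def)

lemma range_gamma_mat_iff:
  "v \<in> range (mat2_apply (gamma_mat x y a)) \<longleftrightarrow> (\<exists>s t. v = (x * s + a * t, y * t))"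
  by (auto simp: gamma_mat_def mat2_apply_def image_iff)

lemma eta_mat_columns_in_range:
  "(y, 0) \<in> range (mat2_apply (eta_mat x y b))" "(- b, x) \<in> range (mat2_apply (eta_mat x y b))"
  using rangeI[of "mat2_apply (eta_mat x y b)" "(1, 0)"] rangeI[of "mat2_apply (eta_mat x y b)" "(0, 1)"]
  by (simp_all add: mat2_apply_def eta_mat_def)

lemma lift_lower_left_in_gen_ideal:
  assumes rep: "regular_exact_pair x y"
    and wr: "weakly_regular_quot2 a x y \<or> weakly_regular_quot2 b x y"
    and Q: "\<And>v. v \<in> range (mat2_apply (eta_mat x y b)) \<Longrightarrow>
              mat2_apply ((q11, q12), (q21, q22)) v \<in> range (mat2_apply (gamma_mat x y a))"
  shows "q21 \<in> gen_ideal [x, y]"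
proof -
  from Q[OF eta_mat_columns_in_range(1)] Q[OF eta_mat_columns_in_range(2)] obtain s t t'
    where col1: "y * q11 = x * s + a * t" "y * q21 = y * t" and col2: "- b * q21 + x * q22 = y * t'"
    unfolding range_gamma_mat_iff by (auto simp: mat2_apply_def mult.commute)
  from wr show ?thesis
  proof
    assume wr_a: "weakly_regular_quot2 a x y"
    have "a * t = (- s) * x + q11 * y" using col1(1) by (simp add: algebra_simps)
    then have "t \<in> gen_ideal [x, y]" using wr_a unfolding weakly_regular_quot2_def gen_ideal_pair_iff by blast
    then obtain r r' where t: "t = r * x + r' * y" unfolding gen_ideal_pair_iff by blast
    have "y * (q21 - t) = x * 0" using col1(2) by (simp add: algebra_simps)
    then obtain k where "q21 - t = x * k"
      using regular_exact_pair_cancel rep unfolding regular_exact_pair_commute[of x] by blast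
    then have "q21 = (r + k) * x + r' * y" using t by (simp add: algebra_simps)
    then show ?thesis unfolding gen_ideal_pair_iff by blast
  next
    assume wr_b: "weakly_regular_quot2 b x y"
    have "b * q21 = q22 * x + (- t') * y" using col2 by (simp add: algebra_simps)
    then show ?thesis using wr_b unfolding weakly_regular_quot2_def gen_ideal_pair_iff by blast
  qed
qed

lemma lift_unit_of_lower_right_unit:
  fixes x y b :: "'a::comm_ring_1"
  assumes loc: "local_ring TYPE('a)"
    and rep: "regular_exact_pair x y"
    and Q: "\<And>v. v \<in> range (mat2_apply (eta_mat x y b)) \<Longrightarrow>
              mat2_apply ((q11, q12), (q21, q22)) v \<in> range (mat2_apply (gamma_mat x y a))"
    and q21: "q21 \<in> gen_ideal [x, y]"
    and q22: "q22 dvd 1"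
  shows "b dvd 1"
proof -
  from Q[OF eta_mat_columns_in_range(2)] obtain t where col2: "- b * q21 + x * q22 = y * t"
    unfolding range_gamma_mat_iff by (auto simp: mat2_apply_def mult.commute)
  from q21 obtain \<alpha> \<beta> where q21_eq: "q21 = \<alpha> * x + \<beta> * y" unfolding gen_ideal_pair_iff by blast
  have "x * (q22 - b * \<alpha>) = y * (t + b * \<beta>)" using col2 q21_eq by (simp add: algebra_simps)
  then obtain k where "q22 - b * \<alpha> = y * k" using regular_exact_pair_cancel[OF rep] by blast
  then have "b * \<alpha> = q22 + (0 * x + (- k) * y)" by (simp add: algebra_simps)
  moreover have "(q22 + (0 * x + (- k) * y)) dvd 1"
    using local_ring_unit_add_gen_ideal_pair[OF loc _ _ q22] regular_exact_pair_nonunits[OF rep]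
    unfolding gen_ideal_pair_iff by blast
  ultimately show ?thesis by (metis dvd_mult_left)
qed

lemma lift_lower_right_units:
  fixes x y :: "'a::comm_ring_1"
  assumes loc: "local_ring TYPE('a)"
    and nonunits: "\<not> x dvd 1" "\<not> y dvd 1"
    and p21: "p21 \<in> gen_ideal [x, y]"
    and comp: "mat2_apply ((p11, p12), (p21, p22)) (mat2_apply ((q11, q12), (q21, q22)) (0, 1)) - (0, 1)
               \<in> range (mat2_apply (gamma_mat x y a))"
  shows "p22 dvd 1" "q22 dvd 1"
proof -
  from comp obtain t where "p21 * q12 + p22 * q22 - 1 = y * t"
    unfolding range_gamma_mat_iff by (auto simp: mat2_apply_def)
  moreover from p21 obtain \<alpha> \<beta> where "p21 = \<alpha> * x + \<beta> * y" unfolding gen_ideal_pair_iff by blast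
  ultimately have "p22 * q22 = 1 + ((- \<alpha> * q12) * x + (t - \<beta> * q12) * y)"
    by (simp add: algebra_simps)
  moreover have "(- \<alpha> * q12) * x + (t - \<beta> * q12) * y \<in> gen_ideal [x, y]"
    unfolding gen_ideal_pair_iff by blast
  then have "(1 + ((- \<alpha> * q12) * x + (t - \<beta> * q12) * y)) dvd 1"
    by (rule local_ring_unit_add_gen_ideal_pair[OF loc nonunits dvd_refl])
  ultimately have "p22 * q22 dvd 1" by simp
  then show "p22 dvd 1" "q22 dvd 1" by (auto dest: dvd_mult_left dvd_mult_right)
qed

theorem theorem5p1:
  fixes x y a b :: "'a::comm_ring_1"
  assumes "noetherian_ring TYPE('a)"
    and "local_ring TYPE('a)"
    and "regular_exact_pair x y"
    and "weakly_regular_quot2 a x y \<or> weakly_regular_quot2 b x y"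
    and "\<not> (a dvd 1 \<and> b dvd 1)"
  shows "\<not> coker_iso (gamma_mat x y a) (eta_mat x y b)"
proof
  assume iso: "coker_iso (gamma_mat x y a) (eta_mat x y b)"
  obtain Q Q' where
    Q: "\<And>v. v \<in> range (mat2_apply (gamma_mat x y a)) \<Longrightarrow> mat2_apply Q v \<in> range (mat2_apply (eta_mat x y b))"
    and Q': "\<And>v. v \<in> range (mat2_apply (eta_mat x y b)) \<Longrightarrow> mat2_apply Q' v \<in> range (mat2_apply (gamma_mat x y a))"
    and comp: "\<And>v. mat2_apply Q' (mat2_apply Q v) - v \<in> range (mat2_apply (gamma_mat x y a))"
    using coker_iso_lift[OF iso] by blast
  obtain q11 q12 q21 q22 p11 p12 p21 p22
    where "Q = ((q11, q12), (q21, q22))" "Q' = ((p11, p12), (p21, p22))" by (metis prod.collapse)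
  note Q = Q[unfolded this gamma_mat_eq_eta_mat[of x y a] eta_mat_eq_gamma_mat[of x y b]]
    and Q' = Q'[unfolded this] and comp = comp[unfolded this]
  have rep': "regular_exact_pair y x" using assms(3) regular_exact_pair_commute by blast
  have "q21 \<in> gen_ideal [x, y]"
    using lift_lower_left_in_gen_ideal[where x = y and y = x and a = "- b" and b = "- a", OF rep' _ Q] assms(4)
    by (simp add: weakly_regular_quot2_swap gen_ideal_pair_commute disj_commute)
  moreover have "p21 \<in> gen_ideal [x, y]" using lift_lower_left_in_gen_ideal[OF assms(3,4) Q'] .
  ultimately have "p22 dvd 1" "q22 dvd 1"
    using lift_lower_right_units[OF assms(2) regular_exact_pair_nonunits[OF assms(3)] _ comp] by blast+
  then have "b dvd 1" "- a dvd 1"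
    using lift_unit_of_lower_right_unit[where b = b, OF assms(2) assms(3) Q'] \<open>p21 \<in> _\<close>
      lift_unit_of_lower_right_unit[where x = y and y = x and a = "- b" and b = "- a", OF assms(2) rep' Q] \<open>q21 \<in> _\<close>
    by (simp_all add: gen_ideal_pair_commute)
  then show False using assms(5) by simp
qed
end
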